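(* Let $I_1,I_3>0$ and $\gamma,\delta\in\mathbb{R}$. Consider the time-dependent Hamiltonian (harmonic Lagrange top with time-dependent potential) on the phase space with coordinates Euler angles $(\phi,\theta,\psi)$, $\theta\in(0,\pi)$, and conjugate momenta $(p_\phi,p_\theta,p_\psi)$: \[ H=\frac{1}{2I_1}\Big(p_\theta^2+\frac{p_\phi^2+p_\psi^2-2p_\phi p_\psi\cos\theta}{\sin^2\theta}\Big)+\frac12\Big(\frac1{I_3}-\frac1{I_1}\Big)p_\psi^2+U(\cos\theta,t), \] \[ U(z,t)=-\frac{1}{I_1}\Big(\tfrac12\gamma e^{t/I_1}z+\tfrac14\delta e^{2t/I_1}z^2\Big). \] Along any solution of Hamilton's equations, $p_\phi$ and $p_\psi$ are constant, and the function $y(\tau):=\theta(I_1\tau)$ (i.e.\ $\tau=t/I_1$) satisfies exactly the trigonometric form of $P_V$, \[ \frac{d^2y}{d\tau^2}=-\frac{\partial V}{\partial y},\qquad V(y,\tau)=-\frac{\kappa_\infty^2}{2\sin^2(y/2)}-\frac{\kappa_0^2}{2\cos^2(y/2)}-\frac{\gamma e^{\tau}}{2}\cos y-\frac{\delta e^{2\tau}}{4}\cos^2 y, \] with parameters $\kappa_0^2=-\tfrac14(p_\phi+p_\psi)^2$ and $\kappa_\infty^2=-\tfrac14(p_\phi-p_\psi)^2$. Conversely, the equation of motion of $\theta$ for this Hamiltonian (with fixed values of $p_\phi,p_\psi$) is equivalent to this trigonometric $P_V$ equation.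
   Context: Hamilton's equations are $\dot q=\partial H/\partial p$, $\dot p=-\partial H/\partial q$ for each conjugate pair $(q,p)\in\{(\phi,p_\phi),(\theta,p_\theta),(\psi,p_\psi)\}$, with $\dot{}=d/dt$. Through $w=-\cot^2(y/2)$, $\zeta=e^\tau$, the trigonometric form of $P_V$ is equivalent to the fifth Painlevé equation with $\alpha=\kappa_\infty^2/2$, $\beta=-\kappa_0^2/2$. *)

theory Defs
  imports "HOL-Analysis.Analysis"
begin

definition U_pot :: "real \<Rightarrow> real \<Rightarrow> real \<Rightarrow> real \<Rightarrow> real \<Rightarrow> real" where
  "U_pot I1 \<gamma> \<delta> z t =
     - (1 / I1) * ((1/2) * \<gamma> * exp (t / I1) * z + (1/4) * \<delta> * exp (2 * t / I1) * z\<^sup>2)"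

definition H_top :: "real \<Rightarrow> real \<Rightarrow> real \<Rightarrow> real \<Rightarrow> real \<Rightarrow> real \<Rightarrow> real \<Rightarrow> real \<Rightarrow> real \<Rightarrow> real \<Rightarrow> real \<Rightarrow> real" where
  "H_top I1 I3 \<gamma> \<delta> ph th ps pph pth pps t =
     (1 / (2 * I1)) * (pth\<^sup>2 + (pph\<^sup>2 + pps\<^sup>2 - 2 * pph * pps * cos th) / (sin th)\<^sup>2)
     + (1/2) * (1 / I3 - 1 / I1) * pps\<^sup>2 + U_pot I1 \<gamma> \<delta> (cos th) t"

definition hamilton_sol ::
  "real \<Rightarrow> real \<Rightarrow> real \<Rightarrow> real \<Rightarrow> real set \<Rightarrow> (real \<Rightarrow> real) \<Rightarrow> (real \<Rightarrow> real) \<Rightarrow> (real \<Rightarrow> real)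
    \<Rightarrow> (real \<Rightarrow> real) \<Rightarrow> (real \<Rightarrow> real) \<Rightarrow> (real \<Rightarrow> real) \<Rightarrow> bool" where
  "hamilton_sol I1 I3 \<gamma> \<delta> T ph th ps pph pth pps \<longleftrightarrow>
     (\<forall>t\<in>T.
       (ph has_real_derivative
          deriv (\<lambda>p. H_top I1 I3 \<gamma> \<delta> (ph t) (th t) (ps t) p (pth t) (pps t) t) (pph t)) (at t) \<and>
       (th has_real_derivative
          deriv (\<lambda>p. H_top I1 I3 \<gamma> \<delta> (ph t) (th t) (ps t) (pph t) p (pps t) t) (pth t)) (at t) \<and>
       (ps has_real_derivative
          deriv (\<lambda>p. H_top I1 I3 \<gamma> \<delta> (ph t) (th t) (ps t) (pph t) (pth t) p t) (pps t)) (at t) \<and>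
       (pph has_real_derivative
          - deriv (\<lambda>q. H_top I1 I3 \<gamma> \<delta> q (th t) (ps t) (pph t) (pth t) (pps t) t) (ph t)) (at t) \<and>
       (pth has_real_derivative
          - deriv (\<lambda>q. H_top I1 I3 \<gamma> \<delta> (ph t) q (ps t) (pph t) (pth t) (pps t) t) (th t)) (at t) \<and>
       (pps has_real_derivative
          - deriv (\<lambda>q. H_top I1 I3 \<gamma> \<delta> (ph t) (th t) q (pph t) (pth t) (pps t) t) (ps t)) (at t))"

definition V_PV :: "real \<Rightarrow> real \<Rightarrow> real \<Rightarrow> real \<Rightarrow> real \<Rightarrow> real \<Rightarrow> real" where
  "V_PV k0sq kinfsq \<gamma> \<delta> y \<tau> =
     - kinfsq / (2 * (sin (y / 2))\<^sup>2) - k0sq / (2 * (cos (y / 2))\<^sup>2)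
     - \<gamma> * exp \<tau> / 2 * cos y - \<delta> * exp (2 * \<tau>) / 4 * (cos y)\<^sup>2"

definition trig_PV :: "real \<Rightarrow> real \<Rightarrow> real \<Rightarrow> real \<Rightarrow> real set \<Rightarrow> (real \<Rightarrow> real) \<Rightarrow> bool" where
  "trig_PV k0sq kinfsq \<gamma> \<delta> S y \<longleftrightarrow>
     (\<exists>y'. \<forall>\<tau>\<in>S. (y has_real_derivative y' \<tau>) (at \<tau>) \<and>
        (y' has_real_derivative - deriv (\<lambda>u. V_PV k0sq kinfsq \<gamma> \<delta> u \<tau>) (y \<tau>)) (at \<tau>))"

end

theory Submission
  imports Defs
begin

text \<open>The angles \<open>\<phi>\<close> and \<open>\<psi>\<close> are cyclic, so \<open>p\<^sub>\<phi>\<close> and \<open>p\<^sub>\<psi>\<close> are conserved and the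
  \<open>\<theta>\<close>-motion is a one degree of freedom problem with time-dependent potential.
  In half-angle variables \<open>u = sin(\<theta>/2)\<close>, \<open>v = cos(\<theta>/2)\<close> the centrifugal term
  \<open>(p\<^sub>\<phi>\<^sup>2 + p\<^sub>\<psi>\<^sup>2 - 2 p\<^sub>\<phi> p\<^sub>\<psi> cos \<theta>) / sin\<^sup>2 \<theta>\<close> splits as
  \<open>(p\<^sub>\<phi> - p\<^sub>\<psi>)\<^sup>2/(4u\<^sup>2) + (p\<^sub>\<phi> + p\<^sub>\<psi>)\<^sup>2/(4v\<^sup>2)\<close>, so that \<open>I\<^sub>1 \<partial>H/\<partial>\<theta>\<close> is exactly
  \<open>\<partial>V/\<partial>y\<close> at \<open>\<tau> = t/I\<^sub>1\<close>. Rescaling time by \<open>I\<^sub>1\<close> then turns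
  \<open>\<theta>' = p\<^sub>\<theta>/I\<^sub>1\<close>, \<open>p\<^sub>\<theta>' = -\<partial>H/\<partial>\<theta>\<close> into \<open>y'' = -\<partial>V/\<partial>y\<close>.\<close>

lemma H_top_deriv_phi: "deriv (\<lambda>q. H_top I1 I3 \<gamma> \<delta> q th z a p b t) x = 0"
  by (simp add: H_top_def)

lemma H_top_deriv_psi: "deriv (\<lambda>q. H_top I1 I3 \<gamma> \<delta> x th q a p b t) z = 0"
  by (simp add: H_top_def)

lemma H_top_deriv_p_theta:
  assumes "I1 \<noteq> 0"
  shows "deriv (\<lambda>p. H_top I1 I3 \<gamma> \<delta> x q z a p b t) p0 = p0 / I1"
proof (rule DERIV_imp_deriv)
  show "((\<lambda>p. H_top I1 I3 \<gamma> \<delta> x q z a p b t) has_real_derivative p0 / I1) (at p0)"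
    unfolding H_top_def using assms by (auto intro!: derivative_eq_intros)
qed

lemma H_top_has_derivative_theta:
  assumes "sin th \<noteq> 0" "I1 \<noteq> 0"
  shows "((\<lambda>q. H_top I1 I3 \<gamma> \<delta> x q z a p b t) has_real_derivative
     (1 / (2 * I1)) * ((2 * a * b * sin th * (sin th)\<^sup>2
        - (a\<^sup>2 + b\<^sup>2 - 2 * a * b * cos th) * (2 * sin th * cos th)) / ((sin th)\<^sup>2)\<^sup>2)
     + (1 / I1) * ((1/2) * \<gamma> * exp (t / I1) + (1/2) * \<delta> * exp (2 * (t / I1)) * cos th) * sin th) (at th)"
  unfolding H_top_def U_pot_def using assms
  by (auto intro!: derivative_eq_intros) (simp add: field_simps power2_eq_square)

lemma V_PV_has_derivative:
  assumes "sin (y/2) \<noteq> 0" "cos (y/2) \<noteq> 0"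
  shows "((\<lambda>u. V_PV k0 ki \<gamma> \<delta> u \<tau>) has_real_derivative
     ki * cos (y/2) / (2 * (sin (y/2))^3) - k0 * sin (y/2) / (2 * (cos (y/2))^3)
     + (\<gamma> * exp \<tau> / 2 + \<delta> * exp (2*\<tau>) / 2 * cos y) * sin y) (at y)"
  unfolding V_PV_def using assms
  by (auto intro!: derivative_eq_intros)
     (simp add: field_simps power2_eq_square power3_eq_cube, algebra)

lemma centrifugal_half_angle:
  fixes u v a b :: real
  assumes "u \<noteq> 0" "v \<noteq> 0" "u\<^sup>2 + v\<^sup>2 = 1"
  shows "(1/2) * ((2 * a * b * (2 * u * v) * (2 * u * v)\<^sup>2
        - (a\<^sup>2 + b\<^sup>2 - 2 * a * b * (v\<^sup>2 - u\<^sup>2)) * (2 * (2 * u * v) * (v\<^sup>2 - u\<^sup>2))) / ((2 * u * v)\<^sup>2)\<^sup>2)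
    = (- (a - b)\<^sup>2 / 4) * v / (2 * u^3) - (- (a + b)\<^sup>2 / 4) * u / (2 * v^3)"
  using assms by (simp add: field_simps) algebra

lemma H_top_deriv_theta_eq_V_PV_deriv:
  assumes th: "th \<in> {0<..<pi}" and I: "I1 \<noteq> 0"
  shows "I1 * deriv (\<lambda>q. H_top I1 I3 \<gamma> \<delta> x q z a p b t) th
       = deriv (\<lambda>u. V_PV (- (a + b)\<^sup>2 / 4) (- (a - b)\<^sup>2 / 4) \<gamma> \<delta> u (t/I1)) th"
proof -
  define u where "u = sin (th/2)"
  define v where "v = cos (th/2)"
  have sin_pos: "sin th > 0" using th by (auto intro: sin_gt_zero)
  have u_pos: "u > 0" unfolding u_def using th by (auto intro: sin_gt_zero)
  have v_pos: "v > 0" unfolding v_def using th by (auto intro!: cos_gt_zero_pi)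
  have uv: "u\<^sup>2 + v\<^sup>2 = 1" unfolding u_def v_def by simp
  have sin_th: "sin th = 2 * u * v" unfolding u_def v_def using sin_double[of "th/2"] by simp
  have cos_th: "cos th = v\<^sup>2 - u\<^sup>2" unfolding u_def v_def using cos_double[of "th/2"] by simp
  have "I1 * deriv (\<lambda>q. H_top I1 I3 \<gamma> \<delta> x q z a p b t) th =
     (1/2) * ((2 * a * b * sin th * (sin th)\<^sup>2
        - (a\<^sup>2 + b\<^sup>2 - 2 * a * b * cos th) * (2 * sin th * cos th)) / ((sin th)\<^sup>2)\<^sup>2)
     + ((1/2) * \<gamma> * exp (t / I1) + (1/2) * \<delta> * exp (2 * (t / I1)) * cos th) * sin th"
    using DERIV_imp_deriv[OF H_top_has_derivative_theta[of th I1]] sin_pos I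
    by (simp add: distrib_left)
  also have "\<dots> = (- (a - b)\<^sup>2 / 4) * v / (2 * u^3) - (- (a + b)\<^sup>2 / 4) * u / (2 * v^3)
      + ((1/2) * \<gamma> * exp (t / I1) + (1/2) * \<delta> * exp (2 * (t / I1)) * cos th) * sin th"
    unfolding sin_th cos_th using centrifugal_half_angle[of u v a b] u_pos v_pos uv by simp
  also have "\<dots> = deriv (\<lambda>u. V_PV (- (a + b)\<^sup>2 / 4) (- (a - b)\<^sup>2 / 4) \<gamma> \<delta> u (t/I1)) th"
    using DERIV_imp_deriv[OF V_PV_has_derivative[of th "- (a + b)\<^sup>2 / 4" "- (a - b)\<^sup>2 / 4" \<gamma> \<delta> "t/I1"]] u_pos v_pos
    unfolding u_def v_def by (simp add: field_simps)
  finally show ?thesis .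
qed

lemma DERIV_comp_scale:
  assumes "(f has_real_derivative D) (at (c * x))"
  shows "((\<lambda>x. f (c * x)) has_real_derivative D * c) (at x)"
  using DERIV_chain2[OF assms DERIV_cmult[OF DERIV_ident, of c]] by simp

lemma second_order_time_rescale_iff:
  fixes c :: real and F :: "real \<Rightarrow> real \<Rightarrow> real"
  assumes c: "c \<noteq> 0"
  shows "(\<exists>p. \<forall>t\<in>T. (x has_real_derivative p t / c) (at t) \<and>
              (p has_real_derivative - F t (x t) / c) (at t))
     \<longleftrightarrow> (\<exists>y'. \<forall>\<tau>\<in>{\<tau>. c * \<tau> \<in> T}. ((\<lambda>\<tau>. x (c * \<tau>)) has_real_derivative y' \<tau>) (at \<tau>) \<and>
              (y' has_real_derivative - F (c * \<tau>) (x (c * \<tau>))) (at \<tau>))"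
proof
  assume "\<exists>p. \<forall>t\<in>T. (x has_real_derivative p t / c) (at t) \<and>
              (p has_real_derivative - F t (x t) / c) (at t)"
  then obtain p where p: "\<And>t. t \<in> T \<Longrightarrow> (x has_real_derivative p t / c) (at t) \<and>
              (p has_real_derivative - F t (x t) / c) (at t)" by blast
  show "\<exists>y'. \<forall>\<tau>\<in>{\<tau>. c * \<tau> \<in> T}. ((\<lambda>\<tau>. x (c * \<tau>)) has_real_derivative y' \<tau>) (at \<tau>) \<and>
              (y' has_real_derivative - F (c * \<tau>) (x (c * \<tau>))) (at \<tau>)"
  proof (intro exI[of _ "\<lambda>\<tau>. p (c * \<tau>)"] ballI conjI)
    fix \<tau> assume "\<tau> \<in> {\<tau>. c * \<tau> \<in> T}"
    then have "c * \<tau> \<in> T" by simp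
    from p[OF this] show "((\<lambda>\<tau>. x (c * \<tau>)) has_real_derivative p (c * \<tau>)) (at \<tau>)"
      and "((\<lambda>\<tau>. p (c * \<tau>)) has_real_derivative - F (c * \<tau>) (x (c * \<tau>))) (at \<tau>)"
      using DERIV_comp_scale c by fastforce+
  qed
next
  assume "\<exists>y'. \<forall>\<tau>\<in>{\<tau>. c * \<tau> \<in> T}. ((\<lambda>\<tau>. x (c * \<tau>)) has_real_derivative y' \<tau>) (at \<tau>) \<and>
              (y' has_real_derivative - F (c * \<tau>) (x (c * \<tau>))) (at \<tau>)"
  then obtain y' where y': "\<And>\<tau>. c * \<tau> \<in> T \<Longrightarrow> ((\<lambda>\<tau>. x (c * \<tau>)) has_real_derivative y' \<tau>) (at \<tau>) \<and>
              (y' has_real_derivative - F (c * \<tau>) (x (c * \<tau>))) (at \<tau>)" by blast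
  show "\<exists>p. \<forall>t\<in>T. (x has_real_derivative p t / c) (at t) \<and>
              (p has_real_derivative - F t (x t) / c) (at t)"
  proof (intro exI[of _ "\<lambda>t. y' (t / c)"] ballI conjI)
    fix t assume "t \<in> T"
    then have "c * ((1 / c) * t) \<in> T" using c by simp
    note y'_at = y'[OF this]
    have x_eq: "x = (\<lambda>t. (\<lambda>\<tau>. x (c * \<tau>)) ((1 / c) * t))" using c by simp
    show "(x has_real_derivative y' (t / c) / c) (at t)"
      by (subst x_eq) (use DERIV_comp_scale[OF conjunct1[OF y'_at]] in simp)
    show "((\<lambda>t. y' (t / c)) has_real_derivative - F t (x t) / c) (at t)"
      using DERIV_comp_scale[OF conjunct2[OF y'_at]] c by simp
  qed
qed

lemma theta_equation_iff_trig_PV: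
  assumes I: "I1 \<noteq> 0" and th_range: "\<forall>t\<in>T. th t \<in> {0<..<pi}"
  shows "(\<exists>pth. \<forall>t\<in>T.
            (th has_real_derivative
               deriv (\<lambda>p. H_top I1 I3 \<gamma> \<delta> (x t) (th t) (z t) a p b t) (pth t)) (at t) \<and>
            (pth has_real_derivative
               - deriv (\<lambda>q. H_top I1 I3 \<gamma> \<delta> (x t) q (z t) a (pth t) b t) (th t)) (at t))
     \<longleftrightarrow> trig_PV (- (a + b)\<^sup>2 / 4) (- (a - b)\<^sup>2 / 4) \<gamma> \<delta> {\<tau>. I1 * \<tau> \<in> T} (\<lambda>\<tau>. th (I1 * \<tau>))"
proof -
  define F where "F t y = deriv (\<lambda>u. V_PV (- (a + b)\<^sup>2 / 4) (- (a - b)\<^sup>2 / 4) \<gamma> \<delta> u (t / I1)) y"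
    for t y
  have "deriv (\<lambda>q. H_top I1 I3 \<gamma> \<delta> (x t) q (z t) a p b t) (th t) = F t (th t) / I1"
    if "t \<in> T" for t p
    using H_top_deriv_theta_eq_V_PV_deriv[of "th t" I1] th_range that I
    unfolding F_def by (simp add: field_simps)
  then have "(\<exists>pth. \<forall>t\<in>T.
            (th has_real_derivative
               deriv (\<lambda>p. H_top I1 I3 \<gamma> \<delta> (x t) (th t) (z t) a p b t) (pth t)) (at t) \<and>
            (pth has_real_derivative
               - deriv (\<lambda>q. H_top I1 I3 \<gamma> \<delta> (x t) q (z t) a (pth t) b t) (th t)) (at t))
     \<longleftrightarrow> (\<exists>pth. \<forall>t\<in>T. (th has_real_derivative pth t / I1) (at t) \<and>
              (pth has_real_derivative - F t (th t) / I1) (at t))"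
    by (simp add: H_top_deriv_p_theta[OF I] cong: ball_cong)
  also have "\<dots> \<longleftrightarrow> (\<exists>y'. \<forall>\<tau>\<in>{\<tau>. I1 * \<tau> \<in> T}.
              ((\<lambda>\<tau>. th (I1 * \<tau>)) has_real_derivative y' \<tau>) (at \<tau>) \<and>
              (y' has_real_derivative - F (I1 * \<tau>) (th (I1 * \<tau>))) (at \<tau>))"
    by (rule second_order_time_rescale_iff[OF I])
  also have "\<dots> \<longleftrightarrow> trig_PV (- (a + b)\<^sup>2 / 4) (- (a - b)\<^sup>2 / 4) \<gamma> \<delta> {\<tau>. I1 * \<tau> \<in> T} (\<lambda>\<tau>. th (I1 * \<tau>))"
    unfolding trig_PV_def F_def using I by simp
  finally show ?thesis .
qed

lemma hamilton_sol_cyclic_momenta_const: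
  assumes sol: "hamilton_sol I1 I3 \<gamma> \<delta> T ph th ps pph pth pps" and T: "is_interval T"
  shows "\<exists>a b. \<forall>t\<in>T. pph t = a \<and> pps t = b"
proof -
  have "convex T" using T by (rule is_interval_convex)
  moreover have "(pph has_real_derivative 0) (at t within T)" "(pps has_real_derivative 0) (at t within T)"
    if "t \<in> T" for t
    using sol that unfolding hamilton_sol_def H_top_deriv_phi H_top_deriv_psi
    by (auto intro: has_field_derivative_at_within)
  ultimately obtain a b where "\<forall>t\<in>T. pph t = a" "\<forall>t\<in>T. pps t = b"
    using has_field_derivative_zero_constant by metis
  then show ?thesis by blast
qed

theorem theorem1:
  fixes I1 I3 \<gamma> \<delta> :: real and T :: "real set"
  assumes "I1 > 0" and "I3 > 0" and "open T" and "is_interval T"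
  shows
   "(\<forall>ph th ps pph pth pps.
       hamilton_sol I1 I3 \<gamma> \<delta> T ph th ps pph pth pps \<and> (\<forall>t\<in>T. th t \<in> {0<..<pi}) \<longrightarrow>
       (\<exists>a b. (\<forall>t\<in>T. pph t = a \<and> pps t = b) \<and>
          trig_PV (- (a + b)\<^sup>2 / 4) (- (a - b)\<^sup>2 / 4) \<gamma> \<delta> {\<tau>. I1 * \<tau> \<in> T} (\<lambda>\<tau>. th (I1 * \<tau>))))
    \<and>
    (\<forall>a b th. (\<forall>t\<in>T. th t \<in> {0<..<pi}) \<longrightarrow>
       ((\<exists>pth. \<forall>t\<in>T.
           (th has_real_derivative
              deriv (\<lambda>p. H_top I1 I3 \<gamma> \<delta> 0 (th t) 0 a p b t) (pth t)) (at t) \<and>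
           (pth has_real_derivative
              - deriv (\<lambda>q. H_top I1 I3 \<gamma> \<delta> 0 q 0 a (pth t) b t) (th t)) (at t))
        \<longleftrightarrow>
        trig_PV (- (a + b)\<^sup>2 / 4) (- (a - b)\<^sup>2 / 4) \<gamma> \<delta> {\<tau>. I1 * \<tau> \<in> T} (\<lambda>\<tau>. th (I1 * \<tau>))))"
proof (intro conjI allI impI)
  fix ph th ps pph pth pps
  assume "hamilton_sol I1 I3 \<gamma> \<delta> T ph th ps pph pth pps \<and> (\<forall>t\<in>T. th t \<in> {0<..<pi})"
  then have sol: "hamilton_sol I1 I3 \<gamma> \<delta> T ph th ps pph pth pps"
    and th_range: "\<forall>t\<in>T. th t \<in> {0<..<pi}" by auto
  obtain a b where ab: "\<forall>t\<in>T. pph t = a \<and> pps t = b"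
    using hamilton_sol_cyclic_momenta_const[OF sol assms(4)] by blast
  have "\<exists>pth. \<forall>t\<in>T.
            (th has_real_derivative
               deriv (\<lambda>p. H_top I1 I3 \<gamma> \<delta> (ph t) (th t) (ps t) a p b t) (pth t)) (at t) \<and>
            (pth has_real_derivative
               - deriv (\<lambda>q. H_top I1 I3 \<gamma> \<delta> (ph t) q (ps t) a (pth t) b t) (th t)) (at t)"
    using sol ab unfolding hamilton_sol_def by metis
  then show "\<exists>a b. (\<forall>t\<in>T. pph t = a \<and> pps t = b) \<and>
      trig_PV (- (a + b)\<^sup>2 / 4) (- (a - b)\<^sup>2 / 4) \<gamma> \<delta> {\<tau>. I1 * \<tau> \<in> T} (\<lambda>\<tau>. th (I1 * \<tau>))"
    using ab theta_equation_iff_trig_PV[of I1 T th] assms(1) th_range by auto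
next
  fix a b th
  assume "\<forall>t\<in>T. th t \<in> {0<..<pi}"
  then show "(\<exists>pth. \<forall>t\<in>T.
           (th has_real_derivative
              deriv (\<lambda>p. H_top I1 I3 \<gamma> \<delta> 0 (th t) 0 a p b t) (pth t)) (at t) \<and>
           (pth has_real_derivative
              - deriv (\<lambda>q. H_top I1 I3 \<gamma> \<delta> 0 q 0 a (pth t) b t) (th t)) (at t))
        \<longleftrightarrow> trig_PV (- (a + b)\<^sup>2 / 4) (- (a - b)\<^sup>2 / 4) \<gamma> \<delta> {\<tau>. I1 * \<tau> \<in> T} (\<lambda>\<tau>. th (I1 * \<tau>))"
    using theta_equation_iff_trig_PV[where x = "\<lambda>_. 0" and z = "\<lambda>_. 0"] assms(1) by simp
qed

end
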